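(* Let $p$ be a prime and let $\pi,\rho,\tau\in\mathbb{L}_p[t]$ be monic polynomials of positive degree with $\pi=\rho\cdot\tau$. Then $\pi$ is expansive if and only if both $\rho$ and $\tau$ are expansive.
   Context: $\mathbb{L}_p=\mathbb{Z}/p\mathbb{Z}[X,X^{-1}]$ is the ring of Laurent polynomials over $\mathbb{Z}/p\mathbb{Z}$. For nonzero $\alpha\in\mathbb{L}_p$, $\deg^+(\alpha)$ (resp. $\deg^-(\alpha)$) is the largest (resp. smallest) exponent of a monomial with nonzero coefficient; $\deg^+(0)=-\infty$, $\deg^-(0)=+\infty$. A monic polynomial $\alpha_0+\alpha_1t+\dots+\alpha_{n-1}t^{n-1}+t^n\in\mathbb{L}_p[t]$ ($n\ge1$) is expansive if $\alpha_0\neq0$ and (i) $\deg^+(\alpha_0)>0$ and $\deg^+(\alpha_0)>\deg^+(\alpha_i)$ for all $i\in\{1,\dots,n-1\}$, and (ii) $\deg^-(\alpha_0)<0$ and $\deg^-(\alpha_0)<\deg^-(\alpha_i)$ for all $i\in\{1,\dots,n-1\}$. *)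

theory Defs
  imports "Berlekamp_Zassenhaus.Finite_Field"
    "HOL-Computational_Algebra.Formal_Laurent_Series"
    "HOL-Computational_Algebra.Polynomial"
    "HOL-Library.Extended_Real"
begin

text \<open>The ring L_p = Z/pZ[X,X^-1] of Laurent polynomials is represented as the
  subring of formal Laurent series over Z/pZ (type 'p mod_ring, p = CARD('p) prime)
  having only finitely many nonzero coefficients.  Elements of L_p[t] are
  polynomials with coefficients in this subring.\<close>

definition is_laurent_poly :: "'a::zero fls \<Rightarrow> bool" where
  "is_laurent_poly f \<longleftrightarrow> finite {n. fls_nth f n \<noteq> 0}"

definition in_Lp_poly :: "'a::zero fls poly \<Rightarrow> bool" where
  "in_Lp_poly P \<longleftrightarrow> (\<forall>i. is_laurent_poly (coeff P i))"

definition deg_plus :: "'a::zero fls \<Rightarrow> ereal" where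
  "deg_plus f = (if f = 0 then -\<infinity> else ereal (of_int (Max {n. fls_nth f n \<noteq> 0})))"

definition deg_minus :: "'a::zero fls \<Rightarrow> ereal" where
  "deg_minus f = (if f = 0 then \<infinity> else ereal (of_int (Min {n. fls_nth f n \<noteq> 0})))"

definition expansive :: "'a::comm_ring_1 fls poly \<Rightarrow> bool" where
  "expansive P \<longleftrightarrow>
     lead_coeff P = 1 \<and> degree P \<ge> 1 \<and> coeff P 0 \<noteq> 0 \<and>
     deg_plus (coeff P 0) > 0 \<and>
     (\<forall>i\<in>{1..<degree P}. deg_plus (coeff P 0) > deg_plus (coeff P i)) \<and>
     deg_minus (coeff P 0) < 0 \<and>
     (\<forall>i\<in>{1..<degree P}. deg_minus (coeff P 0) < deg_minus (coeff P i))"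

end

theory Submission
  imports Defs
begin

(* Both deg- and -deg+ are valuations on L_p, i.e. on the subring of Laurent polynomials
   inside the formal Laurent series.  For a monic polynomial of positive degree, being
   expansive says exactly that, for each of the two valuations, the constant coefficient is
   the only coefficient of minimal valuation: the leading coefficient 1 has valuation 0, which
   turns the comparison with it into deg-(alpha0) < 0 < deg+(alpha0).  As in Gauss's lemma, the
   last index at which the coefficients of a product attain their minimal valuation is the sum
   of the corresponding indices of the factors, so it is 0 for rho * tau iff it is 0 for both
   factors. *)

unbundle fps_syntax

lemma ereal_add_strict_mono_either:
  fixes m n a b :: ereal
  assumes "\<bar>m\<bar> \<noteq> \<infinity>" "\<bar>n\<bar> \<noteq> \<infinity>" "m \<le> a" "n \<le> b" "m < a \<or> n < b"
  shows "m + n < a + b"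
  using assms by (cases m; cases n; cases a; cases b) auto

locale subring_valuation =
  fixes S :: "'a::idom set" and v :: "'a \<Rightarrow> ereal"
  assumes one_in: "1 \<in> S"
    and diff_in: "x \<in> S \<Longrightarrow> y \<in> S \<Longrightarrow> x - y \<in> S"
    and mult_in: "x \<in> S \<Longrightarrow> y \<in> S \<Longrightarrow> x * y \<in> S"
    and valuation_eq_infinity_iff: "x \<in> S \<Longrightarrow> v x = \<infinity> \<longleftrightarrow> x = 0"
    and valuation_neq_minus_infinity: "x \<in> S \<Longrightarrow> v x \<noteq> -\<infinity>"
    and valuation_mult: "x \<in> S \<Longrightarrow> y \<in> S \<Longrightarrow> v (x * y) = v x + v y"
    and valuation_add: "x \<in> S \<Longrightarrow> y \<in> S \<Longrightarrow> min (v x) (v y) \<le> v (x + y)"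
begin

lemma zero_in: "0 \<in> S"
  using diff_in[OF one_in one_in] by simp

lemma uminus_in: "x \<in> S \<Longrightarrow> - x \<in> S"
  using diff_in[OF zero_in] by fastforce

lemma add_in: "x \<in> S \<Longrightarrow> y \<in> S \<Longrightarrow> x + y \<in> S"
  using diff_in[OF _ uminus_in] by fastforce

lemma sum_in: "(\<And>a. a \<in> A \<Longrightarrow> f a \<in> S) \<Longrightarrow> sum f A \<in> S"
  by (induction A rule: infinite_finite_induct) (auto simp: zero_in add_in)

lemma valuation_zero [simp]: "v 0 = \<infinity>"
  using valuation_eq_infinity_iff[OF zero_in] by simp

lemma valuation_finite: "x \<in> S \<Longrightarrow> x \<noteq> 0 \<Longrightarrow> \<bar>v x\<bar> \<noteq> \<infinity>"
  using valuation_eq_infinity_iff valuation_neq_minus_infinity by auto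

lemma valuation_one [simp]: "v 1 = 0"
proof -
  have "v 1 = v 1 + v 1"
    using valuation_mult[OF one_in one_in] by simp
  then show ?thesis
    using valuation_finite[OF one_in] by (cases "v 1") auto
qed

lemma valuation_uminus:
  assumes "x \<in> S"
  shows "v (- x) = v x"
proof -
  have "-1 \<in> S"
    by (rule uminus_in[OF one_in])
  have "v (-1) + v (-1) = 0"
    using valuation_mult[OF \<open>-1 \<in> S\<close> \<open>-1 \<in> S\<close>] by simp
  then have "v (-1) = 0"
    using valuation_finite[OF \<open>-1 \<in> S\<close>] by (cases "v (-1)") auto
  then show ?thesis
    using valuation_mult[OF \<open>-1 \<in> S\<close> assms] by simp
qed

lemma valuation_add_eq:
  assumes "x \<in> S" "y \<in> S" "v x < v y"
  shows "v (x + y) = v x"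
proof (rule antisym)
  have "min (v (x + y)) (v y) \<le> v x"
    using valuation_add[OF add_in[OF assms(1,2)] uminus_in[OF assms(2)]]
    by (simp add: valuation_uminus assms(2))
  then show "v (x + y) \<le> v x"
    using assms(3) by (auto simp: min_def split: if_splits)
  show "v x \<le> v (x + y)"
    using valuation_add[OF assms(1,2)] assms(3) by simp
qed

lemma valuation_sum_ge:
  assumes "finite A" "\<And>a. a \<in> A \<Longrightarrow> f a \<in> S" "\<And>a. a \<in> A \<Longrightarrow> c \<le> v (f a)"
  shows "c \<le> v (sum f A)"
  using assms
proof (induction A rule: finite_induct)
  case (insert a A)
  then have "c \<le> min (v (f a)) (v (sum f A))" by simp
  also have "\<dots> \<le> v (f a + sum f A)" using insert.prems by (intro valuation_add sum_in) auto
  finally show ?case using insert.hyps by simp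
qed simp

lemma valuation_sum_gt:
  assumes "finite A" "\<And>a. a \<in> A \<Longrightarrow> f a \<in> S" "\<And>a. a \<in> A \<Longrightarrow> c < v (f a)" "c < \<infinity>"
  shows "c < v (sum f A)"
  using assms
proof (induction A rule: finite_induct)
  case (insert a A)
  then have "c < min (v (f a)) (v (sum f A))" by simp
  also have "\<dots> \<le> v (f a + sum f A)" using insert.prems by (intro valuation_add sum_in) auto
  finally show ?case using insert.hyps by simp
qed simp

definition last_minimal_coeff :: "'a poly \<Rightarrow> nat \<Rightarrow> bool" where
  "last_minimal_coeff p i \<longleftrightarrow>
     (\<forall>j. v (coeff p i) \<le> v (coeff p j)) \<and> (\<forall>j>i. v (coeff p i) < v (coeff p j))"

lemma last_minimal_coeff_unique:
  "last_minimal_coeff p i \<Longrightarrow> last_minimal_coeff p j \<Longrightarrow> i = j"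
  unfolding last_minimal_coeff_def by (metis linorder_neqE_nat not_le)

lemma last_minimal_coeff_0_iff:
  "last_minimal_coeff p 0 \<longleftrightarrow> (\<forall>j>0. v (coeff p 0) < v (coeff p j))"
  unfolding last_minimal_coeff_def by (metis order.order_iff_strict not_gr_zero)

lemma last_minimal_coeff_exists:
  assumes "range (coeff p) \<subseteq> S" "p \<noteq> 0"
  obtains i where "last_minimal_coeff p i"
proof -
  define m where "m = Min ((\<lambda>j. v (coeff p j)) ` {..degree p})"
  define I where "I = {j. j \<le> degree p \<and> v (coeff p j) = m}"
  have m_le: "m \<le> v (coeff p j)" for j
  proof (cases "j \<le> degree p")
    case False
    then show ?thesis by (simp add: coeff_eq_0)
  qed (simp add: m_def)
  have "m < \<infinity>"
    using m_le[of "degree p"] assms valuation_eq_infinity_iff[of "lead_coeff p"] by fastforce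
  have "m \<in> (\<lambda>j. v (coeff p j)) ` {..degree p}"
    unfolding m_def by (intro Min_in) auto
  then have "I \<noteq> {}" "finite I"
    unfolding I_def by auto
  then have "Max I \<in> I"
    by simp
  have beyond: "m < v (coeff p j)" if "j > Max I" for j
  proof -
    have "j \<notin> I"
      using that Max_ge[OF \<open>finite I\<close>, of j] by auto
    then show ?thesis
      using m_le[of j] \<open>m < \<infinity>\<close> unfolding I_def
      by (cases "j \<le> degree p") (auto simp: coeff_eq_0)
  qed
  have "last_minimal_coeff p (Max I)"
    using \<open>Max I \<in> I\<close> m_le beyond unfolding last_minimal_coeff_def I_def by auto
  then show ?thesis
    by (rule that)
qed

lemma last_minimal_coeff_finite:
  assumes "range (coeff p) \<subseteq> S" "p \<noteq> 0" "last_minimal_coeff p i"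
  shows "\<bar>v (coeff p i)\<bar> \<noteq> \<infinity>"
proof -
  have "v (coeff p i) \<le> v (lead_coeff p)"
    using assms(3) unfolding last_minimal_coeff_def by blast
  also have "\<dots> < \<infinity>"
    using assms(1,2) valuation_eq_infinity_iff[of "lead_coeff p"] by fastforce
  finally show ?thesis
    using assms(1) valuation_neq_minus_infinity[of "coeff p i"] by auto
qed

lemma last_minimal_coeff_mult:
  assumes "range (coeff p) \<subseteq> S" "range (coeff q) \<subseteq> S" "p \<noteq> 0" "q \<noteq> 0"
    and "last_minimal_coeff p i" "last_minimal_coeff q j"
  shows "last_minimal_coeff (p * q) (i + j)"
proof -
  define m where "m = v (coeff p i)"
  define n where "n = v (coeff q j)"
  have in_S: "coeff p k * coeff q l \<in> S" for k l
    using assms(1,2) by (simp add: mult_in range_subsetD)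
  have v_term: "v (coeff p k * coeff q l) = v (coeff p k) + v (coeff q l)" for k l
    using assms(1,2) by (simp add: valuation_mult range_subsetD)
  have fin: "\<bar>m\<bar> \<noteq> \<infinity>" "\<bar>n\<bar> \<noteq> \<infinity>"
    unfolding m_def n_def using last_minimal_coeff_finite assms(1,3,5) assms(2,4,6) by simp_all
  then have "m + n < \<infinity>"
    by (cases m; cases n) auto
  have min_p: "m \<le> v (coeff p k)" "i < k \<Longrightarrow> m < v (coeff p k)" for k
    using assms(5) unfolding m_def last_minimal_coeff_def by auto
  have min_q: "n \<le> v (coeff q l)" "j < l \<Longrightarrow> n < v (coeff q l)" for l
    using assms(6) unfolding n_def last_minimal_coeff_def by auto
  have term_ge: "m + n \<le> v (coeff p k * coeff q l)" for k l
    unfolding v_term using min_p(1) min_q(1) by (rule add_mono)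
  have term_gt: "m + n < v (coeff p k * coeff q l)" if "i < k \<or> j < l" for k l
    unfolding v_term using that min_p min_q
    by (intro ereal_add_strict_mono_either fin) auto
  have ge: "m + n \<le> v (coeff (p * q) k)" for k
    unfolding coeff_mult by (intro valuation_sum_ge in_S term_ge) auto
  have gt: "m + n < v (coeff (p * q) k)" if "k > i + j" for k
    unfolding coeff_mult using that \<open>m + n < \<infinity>\<close>
    by (intro valuation_sum_gt in_S term_gt) auto
  \<comment> \<open>In the coefficient of index i + j, only the term with k = i has valuation m + n.\<close>
  have split: "coeff (p * q) (i + j) =
      coeff p i * coeff q j + (\<Sum>k\<in>{..i + j} - {i}. coeff p k * coeff q (i + j - k))"
    unfolding coeff_mult by (subst sum.remove[of _ i]) auto
  have rest: "m + n < v (\<Sum>k\<in>{..i + j} - {i}. coeff p k * coeff q (i + j - k))"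
    using \<open>m + n < \<infinity>\<close> by (intro valuation_sum_gt in_S term_gt) auto
  have "v (coeff (p * q) (i + j)) = m + n"
    unfolding split using rest
    by (subst valuation_add_eq) (auto simp: in_S v_term m_def n_def intro: sum_in)
  then show ?thesis
    unfolding last_minimal_coeff_def using ge gt by simp
qed

lemma last_minimal_coeff_0_mult_iff:
  assumes "range (coeff p) \<subseteq> S" "range (coeff q) \<subseteq> S" "p \<noteq> 0" "q \<noteq> 0"
  shows "last_minimal_coeff (p * q) 0 \<longleftrightarrow> last_minimal_coeff p 0 \<and> last_minimal_coeff q 0"
proof -
  obtain i j where i: "last_minimal_coeff p i" and j: "last_minimal_coeff q j"
    using last_minimal_coeff_exists assms by metis
  then have "last_minimal_coeff (p * q) (i + j)"
    using assms by (intro last_minimal_coeff_mult)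
  then have "last_minimal_coeff (p * q) 0 \<longleftrightarrow> i + j = 0"
    by (auto dest: last_minimal_coeff_unique)
  also have "\<dots> \<longleftrightarrow> last_minimal_coeff p 0 \<and> last_minimal_coeff q 0"
    using i j last_minimal_coeff_unique by auto
  finally show ?thesis .
qed

lemma last_minimal_coeff_0_iff_monic:
  assumes "lead_coeff p = 1" "degree p > 0"
  shows "last_minimal_coeff p 0 \<longleftrightarrow>
    v (coeff p 0) < 0 \<and> (\<forall>j\<in>{1..<degree p}. v (coeff p 0) < v (coeff p j))"
proof -
  have split: "(\<forall>j>0. Q j) \<longleftrightarrow> Q (degree p) \<and> (\<forall>j\<in>{1..<degree p}. Q j) \<and> (\<forall>j>degree p. Q j)"
    for Q :: "nat \<Rightarrow> bool"
  proof
    show "\<forall>j>0. Q j" if "Q (degree p) \<and> (\<forall>j\<in>{1..<degree p}. Q j) \<and> (\<forall>j>degree p. Q j)"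
      using that by (metis Suc_leI One_nat_def atLeastLessThan_iff linorder_neqE_nat)
  qed (use assms(2) in auto)
  have "v (coeff p 0) < v (coeff p j)" if "v (coeff p 0) < 0" "j > degree p" for j
    using that by (auto simp: coeff_eq_0)
  then show ?thesis
    unfolding last_minimal_coeff_0_iff split using assms(1) by auto
qed

end

lemma is_laurent_poly_1: "is_laurent_poly (1 :: 'a::zero_neq_one fls)"
proof -
  have "{n. (1 :: 'a fls) $$ n \<noteq> 0} \<subseteq> {0}"
    by auto
  then show ?thesis
    unfolding is_laurent_poly_def by (rule finite_subset) simp
qed

lemma is_laurent_poly_add:
  "is_laurent_poly f \<Longrightarrow> is_laurent_poly g \<Longrightarrow> is_laurent_poly (f + g :: 'a::monoid_add fls)"
  unfolding is_laurent_poly_def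
  by (rule finite_subset[of _ "{n. f $$ n \<noteq> 0} \<union> {n. g $$ n \<noteq> 0}"]) auto

lemma is_laurent_poly_diff:
  "is_laurent_poly f \<Longrightarrow> is_laurent_poly g \<Longrightarrow> is_laurent_poly (f - g :: 'a::group_add fls)"
  unfolding is_laurent_poly_def
  by (rule finite_subset[of _ "{n. f $$ n \<noteq> 0} \<union> {n. g $$ n \<noteq> 0}"]) auto

lemma is_laurent_poly_mult:
  fixes f g :: "'a::comm_semiring_0 fls"
  assumes "is_laurent_poly f" "is_laurent_poly g"
  shows "is_laurent_poly (f * g)"
proof -
  have "{n. (f * g) $$ n \<noteq> 0} \<subseteq> (\<lambda>(a, b). a + b) ` ({n. f $$ n \<noteq> 0} \<times> {n. g $$ n \<noteq> 0})"
  proof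
    fix n assume "n \<in> {n. (f * g) $$ n \<noteq> 0}"
    then obtain i where "f $$ i * g $$ (n - i) \<noteq> 0"
      unfolding fls_times_nth(2) by (auto elim: sum.not_neutral_contains_not_neutral)
    then show "n \<in> (\<lambda>(a, b). a + b) ` ({n. f $$ n \<noteq> 0} \<times> {n. g $$ n \<noteq> 0})"
      by (intro image_eqI[of _ _ "(i, n - i)"]) auto
  qed
  then show ?thesis
    using assms unfolding is_laurent_poly_def by (auto intro: finite_subset)
qed

lemma fls_times_nth_above:
  fixes f g :: "'a::comm_semiring_0 fls"
  assumes "\<And>n. a < n \<Longrightarrow> f $$ n = 0" "\<And>n. b < n \<Longrightarrow> g $$ n = 0" "a + b \<le> n"
  shows "(f * g) $$ n = (if n = a + b then f $$ a * g $$ b else 0)"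
proof -
  have "(f * g) $$ n =
      (\<Sum>i = fls_subdegree f..n - fls_subdegree g. if i = a then f $$ a * g $$ (n - a) else 0)"
    unfolding fls_times_nth(2)
  proof (rule sum.cong)
    fix i
    show "f $$ i * g $$ (n - i) = (if i = a then f $$ a * g $$ (n - a) else 0)"
      using assms(1)[of i] assms(2)[of "n - i"] assms(3) by (cases i a rule: linorder_cases) auto
  qed simp
  also have "\<dots> = (if n = a + b then f $$ a * g $$ b else 0)"
    using assms(2)[of "n - a"] assms(3) fls_eq0_below_subdegree[of a f] fls_eq0_below_subdegree[of b g]
    by (auto simp: sum.delta)
  finally show ?thesis .
qed

lemma deg_plus_eqI:
  assumes "is_laurent_poly f" "f $$ a \<noteq> 0" "\<And>n. a < n \<Longrightarrow> f $$ n = 0"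
  shows "deg_plus f = a"
proof -
  have "Max {n. f $$ n \<noteq> 0} = a"
    using assms unfolding is_laurent_poly_def by (intro Max_eqI) (auto simp: not_less[symmetric])
  then show ?thesis
    using assms(2) unfolding deg_plus_def by auto
qed

lemma deg_plus_ge:
  assumes "is_laurent_poly f" "f $$ n \<noteq> 0"
  shows "n \<le> deg_plus f"
  using assms Max_ge[of "{n. f $$ n \<noteq> 0}" n] unfolding is_laurent_poly_def deg_plus_def by auto

lemma deg_plus_attained:
  assumes "is_laurent_poly f" "f \<noteq> 0"
  obtains a where "deg_plus f = a" "f $$ a \<noteq> 0" "\<And>n. a < n \<Longrightarrow> f $$ n = 0"
proof
  define a where "a = Max {n. f $$ n \<noteq> 0}"
  have "{n. f $$ n \<noteq> 0} \<noteq> {}"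
    using assms(2) nth_fls_subdegree_nonzero by blast
  then show "f $$ a \<noteq> 0"
    using assms(1) Max_in unfolding a_def is_laurent_poly_def by fastforce
  then show "deg_plus f = a"
    unfolding deg_plus_def a_def by auto
  show "f $$ n = 0" if "a < n" for n
    using that deg_plus_ge[OF assms(1), of n] \<open>deg_plus f = a\<close> by fastforce
qed

lemma deg_plus_mult:
  fixes f g :: "'a::idom fls"
  assumes "is_laurent_poly f" "is_laurent_poly g" "f \<noteq> 0" "g \<noteq> 0"
  shows "deg_plus (f * g) = deg_plus f + deg_plus g"
proof -
  obtain a b where a: "deg_plus f = a" "f $$ a \<noteq> 0" "\<And>n. a < n \<Longrightarrow> f $$ n = 0"
    and b: "deg_plus g = b" "g $$ b \<noteq> 0" "\<And>n. b < n \<Longrightarrow> g $$ n = 0"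
    using deg_plus_attained assms by metis
  have "deg_plus (f * g) = a + b"
    using a b fls_times_nth_above[of a f b g]
    by (intro deg_plus_eqI is_laurent_poly_mult assms) auto
  then show ?thesis
    using a(1) b(1) by simp
qed

lemma deg_plus_add_le:
  assumes "is_laurent_poly f" "is_laurent_poly g"
  shows "deg_plus (f + g) \<le> max (deg_plus f) (deg_plus g)"
proof (cases "f + g = 0")
  case False
  obtain c where "deg_plus (f + g) = c" "(f + g) $$ c \<noteq> 0"
    using deg_plus_attained is_laurent_poly_add False assms by metis
  then show ?thesis
    using deg_plus_ge[OF assms(1), of c] deg_plus_ge[OF assms(2), of c]
    by (cases "f $$ c = 0") (auto simp: le_max_iff_disj)
qed (simp add: deg_plus_def)

lemma deg_minus_eq_subdegree:
  assumes "is_laurent_poly f" "f \<noteq> 0"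
  shows "deg_minus f = fls_subdegree f"
proof -
  have "Min {n. f $$ n \<noteq> 0} = fls_subdegree f"
    using assms unfolding is_laurent_poly_def by (intro Min_eqI) (auto intro: fls_subdegree_leI)
  then show ?thesis
    using assms(2) unfolding deg_minus_def by simp
qed

interpretation deg_minus_valuation:
  subring_valuation "Collect is_laurent_poly :: 'a::idom fls set" deg_minus
proof
  fix x y :: "'a fls"
  assume x: "x \<in> Collect is_laurent_poly" and y: "y \<in> Collect is_laurent_poly"
  show "x - y \<in> Collect is_laurent_poly" "x * y \<in> Collect is_laurent_poly"
    using x y by (simp_all add: is_laurent_poly_diff is_laurent_poly_mult)
  show "deg_minus (x * y) = deg_minus x + deg_minus y"
    using x y by (cases "x = 0 \<or> y = 0") (auto simp: deg_minus_eq_subdegree is_laurent_poly_mult,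
      auto simp: deg_minus_def)
  show "min (deg_minus x) (deg_minus y) \<le> deg_minus (x + y)"
  proof (cases "x = 0 \<or> y = 0 \<or> x + y = 0")
    case False
    then show ?thesis
      using x y fls_plus_subdegree[of x y]
      by (simp add: deg_minus_eq_subdegree is_laurent_poly_add min_def split: if_splits)
  qed (auto simp: deg_minus_def)
qed (auto simp: is_laurent_poly_1 deg_minus_def)

interpretation deg_plus_valuation:
  subring_valuation "Collect is_laurent_poly :: 'a::idom fls set" "\<lambda>f. - deg_plus f"
proof
  fix x y :: "'a fls"
  assume x: "x \<in> Collect is_laurent_poly" and y: "y \<in> Collect is_laurent_poly"
  show "x - y \<in> Collect is_laurent_poly" "x * y \<in> Collect is_laurent_poly"
    using x y by (simp_all add: is_laurent_poly_diff is_laurent_poly_mult)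
  show "- deg_plus (x * y) = - deg_plus x + - deg_plus y"
    using x y by (cases "x = 0 \<or> y = 0") (auto simp: deg_plus_mult, auto simp: deg_plus_def)
  show "min (- deg_plus x) (- deg_plus y) \<le> - deg_plus (x + y)"
    using deg_plus_add_le[of x y] x y
    by (auto simp: ereal_uminus_le_reorder min_def max_def split: if_splits)
qed (auto simp: is_laurent_poly_1 deg_plus_def)

lemma expansive_iff_last_minimal_coeff_0:
  fixes P :: "'a::idom fls poly"
  assumes "lead_coeff P = 1" "degree P > 0"
  shows "expansive P \<longleftrightarrow>
    deg_minus_valuation.last_minimal_coeff P 0 \<and> deg_plus_valuation.last_minimal_coeff P 0"
proof -
  have "deg_minus (coeff P 0) < 0 \<Longrightarrow> coeff P 0 \<noteq> 0"
    by (auto simp: deg_minus_def)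
  then show ?thesis
    unfolding expansive_def deg_minus_valuation.last_minimal_coeff_0_iff_monic[OF assms]
      deg_plus_valuation.last_minimal_coeff_0_iff_monic[OF assms]
    using assms by (auto simp: ereal_uminus_less_reorder)
qed

theorem lemma1:
  fixes \<pi> \<rho> \<tau> :: "'p::prime_card mod_ring fls poly"
  assumes "in_Lp_poly \<pi>" and "in_Lp_poly \<rho>" and "in_Lp_poly \<tau>"
    and "lead_coeff \<pi> = 1" and "lead_coeff \<rho> = 1" and "lead_coeff \<tau> = 1"
    and "degree \<pi> > 0" and "degree \<rho> > 0" and "degree \<tau> > 0"
    and "\<pi> = \<rho> * \<tau>"
  shows "expansive \<pi> \<longleftrightarrow> expansive \<rho> \<and> expansive \<tau>"
proof -
  have nonzero: "\<rho> \<noteq> 0" "\<tau> \<noteq> 0"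
    using assms(5,6) by auto
  have laurent:
    "range (coeff \<rho>) \<subseteq> Collect is_laurent_poly" "range (coeff \<tau>) \<subseteq> Collect is_laurent_poly"
    using assms(2,3) by (auto simp: in_Lp_poly_def)
  show ?thesis
    using expansive_iff_last_minimal_coeff_0[OF assms(4,7)]
      expansive_iff_last_minimal_coeff_0[OF assms(5,8)]
      expansive_iff_last_minimal_coeff_0[OF assms(6,9)]
      deg_minus_valuation.last_minimal_coeff_0_mult_iff[OF laurent nonzero]
      deg_plus_valuation.last_minimal_coeff_0_mult_iff[OF laurent nonzero]
    unfolding assms(10) by blast
qed

end
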